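(* Let $n\ge 1$. An element $f=(f_m)_{m\ge1}$ of $A^\infty_{fin}$ belongs to $A_{fin}[\widetilde{Sp}(\mathbb{A}^1_n)]$ if and only if $f_m\in R^m_n$ for every $m\ge 1$. Equivalently, $A_{fin}[\widetilde{Sp}(\mathbb{A}^1_n)]=R_n^\infty\cap A^\infty_{fin}$, which is the graded inverse limit $\varprojlim_m\big(R^m_n\cap A_m\big)$.
   Context: Fix $n\ge1$. For $m\ge1$ let $P_m=\mathbb{R}[x_{ij},y_{ij}]_{1\le i\le m,\,1\le j\le n}$, graded by total degree (every variable has degree 1). The symmetric group $S_m$ acts on $P_m$ by permuting the block index $i$ (simultaneously in the $x$ and $y$ variables); let $A_m=P_m^{S_m}$ be the invariants. Let $\pi_m:A_{m+1}\to A_m$ be the map setting $x_{m+1,j}=y_{m+1,j}=0$ for all $j$. Let $A^\infty_{fin}=\varprojlim_m A_m$, the inverse limit taken in the category of graded rings: its elements are finite sums of compatible families $(f_m)_m$ ($f_m\in A_m$, $\pi_m(f_{m+1})=f_m$) of homogeneous elements of a common degree. For a finite multiset $X=\{(\mathbf{x}_1,\mathbf{y}_1),\dots,(\mathbf{x}_r,\mathbf{y}_r)\}$ of points of $\mathbb{R}^n\times\mathbb{R}^n$ and $f\in A^\infty_{fin}$, put $\varphi_X(f)=f_m(\mathbf{x}_1,\mathbf{y}_1,\dots,\mathbf{x}_r,\mathbf{y}_r,0,\dots,0)$ for any $m\ge r$ (this is independent of $m$ and of the ordering). Call a pair $(\mathbf{z},\mathbf{z}')\in\mathbb{R}^n\times\mathbb{R}^n$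 degenerate if $z_j=z'_j$ for some $j$. Define $A_{fin}[\widetilde{Sp}(\mathbb{A}^1_n)]$ to be the set of $f\in A^\infty_{fin}$ such that $\varphi_{X\cup\{(\mathbf{z},\mathbf{z}')\}}(f)=\varphi_X(f)$ for every finite multiset $X$ and every degenerate pair $(\mathbf{z},\mathbf{z}')$. Use the coordinates $\eta_{ij}=y_{ij}-x_{ij}$, $\xi_{ij}=y_{ij}+x_{ij}$, so $P_m=\mathbb{R}[\eta_{ij},\xi_{ij}]$. Define $R^m_n\subseteq P_m$ to be the set of polynomials $f$ such that for every $i\in\{1,\dots,m\}$ and every $k\in\{1,\dots,n\}$, the polynomial obtained from $f$ by substituting $\eta_{ik}=0$ does not depend on any of the variables $\xi_{ij}$ ($1\le j\le n$) or $\eta_{ij}$ ($j\ne k$). Let $R_n^\infty=\varprojlim_m R^m_n$ (graded inverse limit along the same maps). *)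

theory Defs
  imports Complex_Main "HOL-Library.Multiset" "HOL-Combinatorics.Permutations"
begin

(* A point of R^{m x n} x R^{m x n}: values x i j, y i j (block index i < m, coordinate j < n).
   Polynomials over R are represented by their (polynomial) functions; this is faithful
   since R is an infinite field. *)
type_synonym pt = "nat \<Rightarrow> nat \<Rightarrow> real"
type_synonym pfun = "pt \<Rightarrow> pt \<Rightarrow> real"

definition sp_monom :: "nat \<Rightarrow> nat \<Rightarrow> (nat \<Rightarrow> nat \<Rightarrow> nat) \<Rightarrow> (nat \<Rightarrow> nat \<Rightarrow> nat) \<Rightarrow> pfun" where
  "sp_monom n m a b x y = (\<Prod>i<m. \<Prod>j<n. x i j ^ a i j * y i j ^ b i j)"

definition sp_mdeg :: "nat \<Rightarrow> nat \<Rightarrow> (nat \<Rightarrow> nat \<Rightarrow> nat) \<Rightarrow> (nat \<Rightarrow> nat \<Rightarrow> nat) \<Rightarrow> nat" where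
  "sp_mdeg n m a b = (\<Sum>i<m. \<Sum>j<n. a i j + b i j)"

definition sp_poly :: "nat \<Rightarrow> nat \<Rightarrow> pfun \<Rightarrow> bool" where
  "sp_poly n m F \<longleftrightarrow> (\<exists>S c. finite S \<and>
      F = (\<lambda>x y. \<Sum>(a,b)\<in>S. c (a,b) * sp_monom n m a b x y))"

definition sp_homog :: "nat \<Rightarrow> nat \<Rightarrow> nat \<Rightarrow> pfun \<Rightarrow> bool" where
  "sp_homog n m d F \<longleftrightarrow> (\<exists>S c. finite S \<and> (\<forall>(a,b)\<in>S. sp_mdeg n m a b = d) \<and>
      F = (\<lambda>x y. \<Sum>(a,b)\<in>S. c (a,b) * sp_monom n m a b x y))"

definition sp_sym :: "nat \<Rightarrow> pfun \<Rightarrow> bool" where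
  "sp_sym m F \<longleftrightarrow> (\<forall>\<sigma>. \<sigma> permutes {..<m} \<longrightarrow> (\<forall>x y. F (x \<circ> \<sigma>) (y \<circ> \<sigma>) = F x y))"

(* pi_m : A_{m+1} -> A_m, setting the (m+1)-st block (0-based index m) to zero *)
definition sp_proj :: "nat \<Rightarrow> pfun \<Rightarrow> pfun" where
  "sp_proj m F = (\<lambda>x y. F (x(m := (\<lambda>_. 0))) (y(m := (\<lambda>_. 0))))"

definition sp_compat_homog :: "nat \<Rightarrow> nat \<Rightarrow> (nat \<Rightarrow> pfun) \<Rightarrow> bool" where
  "sp_compat_homog n d g \<longleftrightarrow>
     (\<forall>m\<ge>1. sp_homog n m d (g m) \<and> sp_sym m (g m)) \<and>
     (\<forall>m\<ge>1. sp_proj m (g (Suc m)) = g m)"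

definition A_inf_fin :: "nat \<Rightarrow> (nat \<Rightarrow> pfun) \<Rightarrow> bool" where
  "A_inf_fin n f \<longleftrightarrow> (\<exists>N g. (\<forall>k\<le>N. sp_compat_homog n k (g k)) \<and>
      (\<forall>m\<ge>1. f m = (\<lambda>x y. \<Sum>k\<le>N. g k m x y)))"

definition sp_pts :: "((nat \<Rightarrow> real) \<times> (nat \<Rightarrow> real)) list \<Rightarrow> pt \<times> pt" where
  "sp_pts xs = ((\<lambda>i j. if i < length xs then fst (xs ! i) j else 0),
                (\<lambda>i j. if i < length xs then snd (xs ! i) j else 0))"

(* phi_X(f) = f_m(x_1,y_1,...,x_r,y_r,0,...,0) with m = max 1 r *)
definition sp_phi :: "(nat \<Rightarrow> pfun) \<Rightarrow> ((nat \<Rightarrow> real) \<times> (nat \<Rightarrow> real)) multiset \<Rightarrow> real" where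
  "sp_phi f X = (let xs = (SOME xs. mset xs = X); p = sp_pts xs
                 in f (max 1 (length xs)) (fst p) (snd p))"

definition sp_degenerate :: "nat \<Rightarrow> (nat \<Rightarrow> real) \<times> (nat \<Rightarrow> real) \<Rightarrow> bool" where
  "sp_degenerate n p \<longleftrightarrow> (\<exists>j<n. fst p j = snd p j)"

definition A_fin_Sp :: "nat \<Rightarrow> (nat \<Rightarrow> pfun) \<Rightarrow> bool" where
  "A_fin_Sp n f \<longleftrightarrow> A_inf_fin n f \<and>
     (\<forall>X p. sp_degenerate n p \<longrightarrow> sp_phi f (add_mset p X) = sp_phi f X)"

definition sp_upd :: "pt \<Rightarrow> nat \<Rightarrow> nat \<Rightarrow> real \<Rightarrow> pt" where
  "sp_upd v i j t = v(i := (v i)(j := t))"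

definition sp_etaxi :: "pfun \<Rightarrow> pfun" where
  "sp_etaxi F = (\<lambda>xi eta. F (\<lambda>a b. (xi a b - eta a b) / 2) (\<lambda>a b. (xi a b + eta a b) / 2))"

definition R_mn :: "nat \<Rightarrow> nat \<Rightarrow> pfun \<Rightarrow> bool" where
  "R_mn n m F \<longleftrightarrow> sp_poly n m F \<and>
     (\<forall>i<m. \<forall>k<n.
        let G = (\<lambda>xi eta. sp_etaxi F xi (sp_upd eta i k 0)) in
        (\<forall>j<n. \<forall>xi eta t. G (sp_upd xi i j t) eta = G xi eta) \<and>
        (\<forall>j<n. j \<noteq> k \<longrightarrow> (\<forall>xi eta t. G xi (sp_upd eta i j t) = G xi eta)))"

end

theory Submission
  imports Defs
begin

text \<open>
  For a finite multiset X of points, \<open>\<phi>\<^sub>X(f)\<close> is f_m evaluated at X placed in the first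
  blocks; by symmetry and compatibility, adjoining a point p means filling one more block with p
  and dropping it means zeroing that block. So invariance under adjoining pairs with
  \<open>z\<^sub>k = z'\<^sub>k\<close> says exactly: f_m is unchanged when block i is set to zero, provided
  \<open>x\<^sub>i\<^sub>k = y\<^sub>i\<^sub>k\<close>. In the coordinates \<open>\<eta> = y - x\<close>, \<open>\<xi> = y + x\<close> the proviso is \<open>\<eta>\<^sub>i\<^sub>k = 0\<close>, and
  "unchanged by zeroing block i" is the same as "independent of the remaining variables of
  block i" on that hyperplane, which is the defining condition of \<open>R\<^sup>m\<^sub>n\<close>.
\<close>

lemma sp_monom_cong:
  assumes "\<forall>a<m. \<forall>b<n. x a b = x' a b \<and> y a b = y' a b"
  shows "sp_monom n m a b x y = sp_monom n m a b x' y'"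
  unfolding sp_monom_def using assms by (intro prod.cong refl) auto

lemma sp_homog_cong:
  assumes "sp_homog n m d F" "\<forall>a<m. \<forall>b<n. x a b = x' a b \<and> y a b = y' a b"
  shows "F x y = F x' y'"
proof -
  from assms(1) obtain S c where "F = (\<lambda>x y. \<Sum>(a,b)\<in>S. c (a,b) * sp_monom n m a b x y)"
    unfolding sp_homog_def by blast
  then show ?thesis using sp_monom_cong[OF assms(2)] by simp
qed

lemma sp_homog_imp_sp_poly: "sp_homog n m d F \<Longrightarrow> sp_poly n m F"
  unfolding sp_homog_def sp_poly_def by blast

lemma sp_poly_zero: "sp_poly n m (\<lambda>x y. 0)"
  unfolding sp_poly_def by (rule exI[of _ "{}"]) auto

lemma sp_poly_add:
  assumes "sp_poly n m F" "sp_poly n m G"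
  shows "sp_poly n m (\<lambda>x y. F x y + G x y)"
proof -
  obtain S c where S: "finite S" "F = (\<lambda>x y. \<Sum>(a,b)\<in>S. c (a,b) * sp_monom n m a b x y)"
    using assms(1) unfolding sp_poly_def by blast
  obtain T e where T: "finite T" "G = (\<lambda>x y. \<Sum>(a,b)\<in>T. e (a,b) * sp_monom n m a b x y)"
    using assms(2) unfolding sp_poly_def by blast
  define h where "h = (\<lambda>p. (if p \<in> S then c p else 0) + (if p \<in> T then e p else 0))"
  have "(\<lambda>x y. F x y + G x y) = (\<lambda>x y. \<Sum>(a,b)\<in>S \<union> T. h (a,b) * sp_monom n m a b x y)"
  proof (intro ext)
    fix x y
    let ?M = "\<lambda>p. sp_monom n m (fst p) (snd p) x y"
    have "(\<Sum>(a,b)\<in>S \<union> T. h (a,b) * sp_monom n m a b x y)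
        = (\<Sum>p\<in>S \<union> T. if p \<in> S then c p * ?M p else 0)
        + (\<Sum>p\<in>S \<union> T. if p \<in> T then e p * ?M p else 0)"
      unfolding sum.distrib[symmetric] h_def
      by (intro sum.cong refl) (auto simp: split_def distrib_right)
    also have "\<dots> = (\<Sum>p\<in>S. c p * ?M p) + (\<Sum>p\<in>T. e p * ?M p)"
      using S(1) T(1) by (simp add: sum.If_cases Int_absorb1 Int_absorb2)
    finally show "F x y + G x y = (\<Sum>(a,b)\<in>S \<union> T. h (a,b) * sp_monom n m a b x y)"
      using S T by (simp add: split_def)
  qed
  then show ?thesis unfolding sp_poly_def using S(1) T(1) by blast
qed

lemma sp_poly_sum:
  assumes "finite K" "\<And>k. k \<in> K \<Longrightarrow> sp_poly n m (g k)"
  shows "sp_poly n m (\<lambda>x y. \<Sum>k\<in>K. g k x y)"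
  using assms
proof (induction K rule: finite_induct)
  case empty
  then show ?case by (simp add: sp_poly_zero)
next
  case (insert a K)
  then show ?case using sp_poly_add[of n m "g a" "\<lambda>x y. \<Sum>k\<in>K. g k x y"] by simp
qed

lemma A_inf_fin_sp_poly:
  assumes "A_inf_fin n f" "m \<ge> 1"
  shows "sp_poly n m (f m)"
proof -
  obtain N g where g: "\<forall>k\<le>N. sp_compat_homog n k (g k)"
      "\<forall>m\<ge>1. f m = (\<lambda>x y. \<Sum>k\<le>N. g k m x y)"
    using assms(1) unfolding A_inf_fin_def by blast
  have "\<And>k. k \<le> N \<Longrightarrow> sp_poly n m (g k m)"
    using g(1) assms(2) sp_homog_imp_sp_poly unfolding sp_compat_homog_def by blast
  then show ?thesis using g(2) assms(2) by (auto intro: sp_poly_sum)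
qed

definition block_removable :: "pfun \<Rightarrow> nat \<Rightarrow> nat \<Rightarrow> bool" where
  "block_removable F i k \<longleftrightarrow>
     (\<forall>x y. x i k = y i k \<longrightarrow> F x y = F (x(i := \<lambda>_. 0)) (y(i := \<lambda>_. 0)))"

definition etaxi_condition :: "nat \<Rightarrow> pfun \<Rightarrow> nat \<Rightarrow> nat \<Rightarrow> bool" where
  "etaxi_condition n F i k \<longleftrightarrow>
     (let G = (\<lambda>xi eta. sp_etaxi F xi (sp_upd eta i k 0)) in
        (\<forall>j<n. \<forall>xi eta t. G (sp_upd xi i j t) eta = G xi eta) \<and>
        (\<forall>j<n. j \<noteq> k \<longrightarrow> (\<forall>xi eta t. G xi (sp_upd eta i j t) = G xi eta)))"

lemma R_mn_iff: "R_mn n m F \<longleftrightarrow> sp_poly n m F \<and> (\<forall>i<m. \<forall>k<n. etaxi_condition n F i k)"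
  unfolding R_mn_def etaxi_condition_def ..

lemma block_removable_imp_etaxi_condition:
  assumes "block_removable F i k"
  shows "etaxi_condition n F i k"
proof -
  let ?G = "\<lambda>xi eta. sp_etaxi F xi (sp_upd eta i k 0)"
  have G_cong: "?G xi eta = ?G xi' eta'"
    if "\<forall>a b. a \<noteq> i \<longrightarrow> xi a b = xi' a b \<and> eta a b = eta' a b" for xi eta xi' eta'
  proof -
    define X where "X = (\<lambda>xi eta a b. (xi a b - sp_upd eta i k 0 a b) / (2::real))"
    define Y where "Y = (\<lambda>xi eta a b. (xi a b + sp_upd eta i k 0 a b) / (2::real))"
    have G: "?G u v = F (X u v) (Y u v)" for u v
      unfolding sp_etaxi_def X_def Y_def ..
    have diag: "X u v i k = Y u v i k" for u v
      by (simp add: sp_upd_def X_def Y_def)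
    have "(X xi eta)(i := \<lambda>_. 0) = (X xi' eta')(i := \<lambda>_. 0)"
      "(Y xi eta)(i := \<lambda>_. 0) = (Y xi' eta')(i := \<lambda>_. 0)"
      using that by (simp_all add: fun_eq_iff sp_upd_def X_def Y_def)
    then show ?thesis
      using assms diag unfolding G block_removable_def by metis
  qed
  show ?thesis
    unfolding etaxi_condition_def Let_def
    by (intro conjI allI impI G_cong) (simp_all add: sp_upd_def)
qed

lemma zero_block_prefix:
  fixes G :: "pt \<Rightarrow> real"
  assumes "\<And>v j t. j < n \<Longrightarrow> G (sp_upd v i j t) = G v" "j \<le> n"
  shows "G (\<lambda>a b. if a = i \<and> b < j then 0 else v a b) = G v"
  using assms(2)
proof (induction j)
  case 0
  then show ?case by simp
next
  case (Suc j)
  have "(\<lambda>a b. if a = i \<and> b < Suc j then 0 else v a b)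
      = sp_upd (\<lambda>a b. if a = i \<and> b < j then 0 else v a b) i j 0"
    by (auto simp: sp_upd_def fun_eq_iff)
  then show ?case using assms(1)[of j] Suc by simp
qed

lemma etaxi_condition_imp_block_removable:
  assumes cond: "etaxi_condition n F i k" and "k < n"
    and F_cong: "\<And>x y x' y'. (\<And>a b. b < n \<Longrightarrow> x a b = x' a b \<and> y a b = y' a b) \<Longrightarrow>
                   F x y = F x' y'"
  shows "block_removable F i k"
  unfolding block_removable_def
proof (intro allI impI)
  let ?G = "\<lambda>xi eta. sp_etaxi F xi (sp_upd eta i k 0)"
  have xi_free: "\<And>j xi eta t. j < n \<Longrightarrow> ?G (sp_upd xi i j t) eta = ?G xi eta"
    using cond unfolding etaxi_condition_def Let_def by blast
  have eta_free: "?G xi (sp_upd eta i j t) = ?G xi eta" if "j < n" for j xi eta t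
  proof (cases "j = k")
    case True
    then have "sp_upd (sp_upd eta i j t) i k 0 = sp_upd eta i k 0" by (simp add: sp_upd_def)
    then show ?thesis by simp
  next
    case False
    then show ?thesis using cond that unfolding etaxi_condition_def Let_def by blast
  qed
  fix x y :: pt
  assume diag: "x i k = y i k"
  define xi where "xi = (\<lambda>a b. y a b + x a b)"
  define eta where "eta = (\<lambda>a b. y a b - x a b)"
  have "sp_upd eta i k 0 = eta" using diag by (auto simp: sp_upd_def eta_def fun_eq_iff)
  then have "F x y = ?G xi eta" by (simp add: sp_etaxi_def xi_def eta_def)
  also have "\<dots> = ?G (\<lambda>a b. if a = i \<and> b < n then 0 else xi a b) eta"
    using zero_block_prefix[where G = "\<lambda>v. ?G v eta" and n = n and i = i and j = n and v = xi] xi_free by simp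
  also have "\<dots> = ?G (\<lambda>a b. if a = i \<and> b < n then 0 else xi a b)
                     (\<lambda>a b. if a = i \<and> b < n then 0 else eta a b)"
    using zero_block_prefix[where G = "?G _" and n = n and i = i and j = n and v = eta] eta_free by simp
  also have "\<dots> = F (x(i := \<lambda>_. 0)) (y(i := \<lambda>_. 0))"
    unfolding sp_etaxi_def
    by (rule F_cong) (use \<open>k < n\<close> in \<open>auto simp: sp_upd_def xi_def eta_def\<close>)
  finally show "F x y = F (x(i := \<lambda>_. 0)) (y(i := \<lambda>_. 0))" .
qed

lemma block_removable_iff_etaxi_condition:
  assumes "k < n"
    and "\<And>x y x' y'. (\<And>a b. b < n \<Longrightarrow> x a b = x' a b \<and> y a b = y' a b) \<Longrightarrow> F x y = F x' y'"
  shows "block_removable F i k \<longleftrightarrow> etaxi_condition n F i k"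
  using assms block_removable_imp_etaxi_condition etaxi_condition_imp_block_removable by blast

locale symmetric_family =
  fixes n :: nat and f :: "nat \<Rightarrow> pfun"
  assumes f_cong: "m \<ge> 1 \<Longrightarrow> \<forall>a<m. \<forall>b<n. x a b = x' a b \<and> y a b = y' a b \<Longrightarrow>
                     f m x y = f m x' y'"
    and f_sym: "m \<ge> 1 \<Longrightarrow> sp_sym m (f m)"
    and f_proj: "m \<ge> 1 \<Longrightarrow> sp_proj m (f (Suc m)) = f m"
begin

definition eval :: "nat \<Rightarrow> ((nat \<Rightarrow> real) \<times> (nat \<Rightarrow> real)) list \<Rightarrow> real" where
  "eval M xs = f M (fst (sp_pts xs)) (snd (sp_pts xs))"

lemma eval_Suc:
  assumes "length xs \<le> M" "1 \<le> M"
  shows "eval (Suc M) xs = eval M xs"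
proof -
  have "(fst (sp_pts xs))(M := \<lambda>_. 0) = fst (sp_pts xs)"
    "(snd (sp_pts xs))(M := \<lambda>_. 0) = snd (sp_pts xs)"
    using assms(1) by (auto simp: sp_pts_def fun_eq_iff)
  then show ?thesis
    using f_proj[OF assms(2)] unfolding eval_def sp_proj_def by (metis (no_types))
qed

lemma eval_mono:
  assumes "length xs \<le> M" "1 \<le> M" "M \<le> M'"
  shows "eval M' xs = eval M xs"
  using assms(3)
proof (induction M' rule: dec_induct)
  case base
  then show ?case by simp
next
  case (step k)
  then show ?case using eval_Suc[of xs k] assms by simp
qed

lemma eval_mset_eq:
  assumes "mset xs = mset ys" "length ys \<le> M" "1 \<le> M"
  shows "eval M xs = eval M ys"
proof -
  obtain p where p: "p permutes {..<length ys}" "permute_list p ys = xs"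
    using mset_eq_permutation[OF assms(1)] by blast
  have "p permutes {..<M}" using permutes_subset[OF p(1)] assms(2) by auto
  moreover have "fst (sp_pts xs) = fst (sp_pts ys) \<circ> p \<and> snd (sp_pts xs) = snd (sp_pts ys) \<circ> p"
  proof -
    have "(i < length ys \<longrightarrow> xs ! i = ys ! p i \<and> p i < length ys) \<and> (\<not> i < length ys \<longrightarrow> p i = i)"
      for i using permute_list_nth[OF p(1)] p permutes_in_image[OF p(1)] permutes_not_in
      by fastforce
    moreover have "length xs = length ys" using p(2) by auto
    ultimately show ?thesis by (auto simp: sp_pts_def fun_eq_iff)
  qed
  ultimately show ?thesis using f_sym[OF assms(3)] unfolding eval_def sp_sym_def by simp
qed

lemma sp_phi_eq_eval:
  assumes "mset xs = X" "length xs \<le> M" "1 \<le> M"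
  shows "sp_phi f X = eval M xs"
proof -
  define ys where "ys = (SOME ys. mset ys = X)"
  have ys: "mset ys = X" unfolding ys_def by (rule someI_ex) (rule ex_mset)
  then have L: "length ys = length xs" using assms(1) by (metis size_mset)
  have "sp_phi f X = eval (max 1 (length ys)) ys"
    unfolding sp_phi_def eval_def ys_def[symmetric] by (simp add: Let_def)
  also have "\<dots> = eval M ys" using eval_mono[of ys "max 1 (length ys)" M] assms L by simp
  also have "\<dots> = eval M xs" using eval_mset_eq[of ys xs M] ys assms L by simp
  finally show ?thesis .
qed

lemma sp_phi_delete_eq_eval_zero:
  assumes "i < length xs" "length xs \<le> M" "1 \<le> M"
  shows "sp_phi f (mset xs - {#xs ! i#}) = eval M (xs[i := (\<lambda>_. 0, \<lambda>_. 0)])"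
proof -
  let ?zs = "take i xs @ drop (Suc i) xs"
  have "mset xs - {#xs ! i#} = mset ?zs"
    using assms(1) by (subst id_take_nth_drop[OF assms(1)]) simp
  moreover have "sp_pts (?zs @ [(\<lambda>_. 0, \<lambda>_. 0)]) = sp_pts ?zs"
    by (auto simp: sp_pts_def fun_eq_iff nth_append)
  ultimately have "sp_phi f (mset xs - {#xs ! i#}) = eval M (?zs @ [(\<lambda>_. 0, \<lambda>_. 0)])"
    using sp_phi_eq_eval[of ?zs _ M] assms by (simp add: eval_def)
  also have "\<dots> = eval M (xs[i := (\<lambda>_. 0, \<lambda>_. 0)])"
    using assms by (intro eval_mset_eq) (simp_all add: upd_conv_take_nth_drop)
  finally show ?thesis .
qed

lemma degenerate_invariant_imp_block_removable:
  assumes inv: "\<forall>X p. sp_degenerate n p \<longrightarrow> sp_phi f (add_mset p X) = sp_phi f X"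
    and "1 \<le> m" "i < m" "k < n"
  shows "block_removable (f m) i k"
  unfolding block_removable_def
proof (intro allI impI)
  fix x y :: pt
  assume diag: "x i k = y i k"
  define xs where "xs = map (\<lambda>a. (x a, y a)) [0..<m]"
  have len: "length xs = m" and xs_i: "xs ! i = (x i, y i)"
    unfolding xs_def using assms by simp_all
  have "sp_degenerate n (xs ! i)" unfolding sp_degenerate_def xs_i using diag assms by auto
  have "f m x y = eval m xs"
    unfolding eval_def using assms(2) by (rule f_cong) (auto simp: sp_pts_def xs_def)
  also have "\<dots> = sp_phi f (add_mset (xs ! i) (mset xs - {#xs ! i#}))"
    using sp_phi_eq_eval[of xs _ m] assms len by (simp add: insert_DiffM)
  also have "\<dots> = sp_phi f (mset xs - {#xs ! i#})"
    using inv \<open>sp_degenerate n (xs ! i)\<close> by blast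
  also have "\<dots> = eval m (xs[i := (\<lambda>_. 0, \<lambda>_. 0)])"
    using sp_phi_delete_eq_eval_zero[of i xs m] assms len by simp
  also have "\<dots> = f m (x(i := \<lambda>_. 0)) (y(i := \<lambda>_. 0))"
    unfolding eval_def using assms(2)
    by (rule f_cong) (auto simp: sp_pts_def xs_def len nth_list_update)
  finally show "f m x y = f m (x(i := \<lambda>_. 0)) (y(i := \<lambda>_. 0))" .
qed

lemma block_removable_imp_degenerate_invariant:
  assumes removable: "\<forall>m\<ge>1. \<forall>i<m. \<forall>k<n. block_removable (f m) i k"
    and "sp_degenerate n p"
  shows "sp_phi f (add_mset p X) = sp_phi f X"
proof -
  obtain ys where ys: "mset ys = X" using ex_mset by blast
  define r where "r = length ys"
  obtain k where k: "k < n" "fst p k = snd p k"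
    using assms(2) unfolding sp_degenerate_def by blast
  let ?x = "fst (sp_pts (ys @ [p]))" and ?y = "snd (sp_pts (ys @ [p]))"
  have "sp_phi f (add_mset p X) = f (Suc r) ?x ?y"
    using sp_phi_eq_eval[of "ys @ [p]" _ "Suc r"] ys r_def by (simp add: eval_def)
  also have "\<dots> = f (Suc r) (?x(r := \<lambda>_. 0)) (?y(r := \<lambda>_. 0))"
    using removable k unfolding block_removable_def
    by (auto simp: sp_pts_def r_def)
  also have "\<dots> = eval (Suc r) ys"
  proof -
    have "?x(r := \<lambda>_. 0) = fst (sp_pts ys)" "?y(r := \<lambda>_. 0) = snd (sp_pts ys)"
      by (auto simp: sp_pts_def fun_eq_iff nth_append r_def)
    then show ?thesis unfolding eval_def by simp
  qed
  also have "\<dots> = sp_phi f X" using sp_phi_eq_eval[of ys X "Suc r"] ys r_def by simp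
  finally show ?thesis .
qed

lemma degenerate_invariant_iff_block_removable:
  "(\<forall>X p. sp_degenerate n p \<longrightarrow> sp_phi f (add_mset p X) = sp_phi f X) \<longleftrightarrow>
   (\<forall>m\<ge>1. \<forall>i<m. \<forall>k<n. block_removable (f m) i k)"
  using degenerate_invariant_imp_block_removable block_removable_imp_degenerate_invariant
  by blast

end

lemma A_inf_fin_symmetric_family:
  assumes "A_inf_fin n f"
  shows "symmetric_family n f"
proof
  obtain N g where g: "\<forall>k\<le>N. sp_compat_homog n k (g k)"
      "\<forall>m\<ge>1. f m = (\<lambda>x y. \<Sum>k\<le>N. g k m x y)"
    using assms unfolding A_inf_fin_def by blast
  fix m :: nat
  assume m: "m \<ge> 1"
  then have f: "f m = (\<lambda>x y. \<Sum>k\<le>N. g k m x y)" "f (Suc m) = (\<lambda>x y. \<Sum>k\<le>N. g k (Suc m) x y)"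
    using g(2) by auto
  have g_m: "\<And>k. k \<le> N \<Longrightarrow>
      sp_homog n m k (g k m) \<and> sp_sym m (g k m) \<and> sp_proj m (g k (Suc m)) = g k m"
    using g(1) m unfolding sp_compat_homog_def by blast
  show "f m x y = f m x' y'" if "\<forall>a<m. \<forall>b<n. x a b = x' a b \<and> y a b = y' a b" for x y x' y'
    unfolding f using g_m sp_homog_cong[OF _ that] by (intro sum.cong) auto
  show "sp_sym m (f m)"
    using g_m unfolding sp_sym_def f by (auto intro: sum.cong)
  show "sp_proj m (f (Suc m)) = f m"
    using g_m unfolding f sp_proj_def by (auto simp: fun_eq_iff intro: sum.cong)
qed

theorem proposition2p4:
  fixes n :: nat and f :: "nat \<Rightarrow> pfun"
  assumes "n \<ge> 1" and "A_inf_fin n f"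
  shows "A_fin_Sp n f \<longleftrightarrow> (\<forall>m\<ge>1. R_mn n m (f m))"
proof -
  interpret symmetric_family n f
    using assms(2) by (rule A_inf_fin_symmetric_family)
  have "\<And>m i k. 1 \<le> m \<Longrightarrow> k < n \<Longrightarrow>
      block_removable (f m) i k \<longleftrightarrow> etaxi_condition n (f m) i k"
    by (rule block_removable_iff_etaxi_condition) (auto intro: f_cong)
  then have "(\<forall>m\<ge>1. \<forall>i<m. \<forall>k<n. block_removable (f m) i k) \<longleftrightarrow>
             (\<forall>m\<ge>1. R_mn n m (f m))"
    using A_inf_fin_sp_poly[OF assms(2)] unfolding R_mn_iff by blast
  then show ?thesis
    unfolding A_fin_Sp_def degenerate_invariant_iff_block_removable using assms(2) by blast
qed

end
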